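(* Let $M$ be a commutative monoid. The map $X\mapsto\mathcal K(X)=\bigcap_{I\in X}I$ is a bijection from the set of irreducible components of the terminal space $\mathcal S(M)$ onto the set of minimal elements (with respect to inclusion) of $\mathcal S(M)$, with inverse $I\mapsto\mathcal H(I)=\{J\in\mathcal S(M)\mid J\supseteq I\}$.
   Context: A monoid is a commutative monoid $(M,\cdot,1)$. An ideal of $M$ is a subset $I\subseteq M$ such that $im\in I$ for all $i\in I$, $m\in M$; it is proper if $I\neq M$. A proper ideal $K$ of $M$ is strongly irreducible if for all ideals $I,J$ of $M$, $I\cap J\subseteq K$ implies $I\subseteq K$ or $J\subseteq K$. $\mathcal S(M)$ is the set of all strongly irreducible ideals of $M$. For $X\subseteq\mathcal S(M)$, $\mathcal K(X)=\bigcap_{I\in X}I$, and $\mathcal{HK}(X)=\{J\in\mathcal S(M)\mid J\supseteq\mathcal K(X)\}$ if $X\neq\emptyset$, $\mathcal{HK}(\emptyset)=\emptyset$. The terminal space of $M$ is the set $\mathcal S(M)$ with the topology whose closed sets are exactly the sets $\mathcal{HK}(X)$, $X\subseteq\mathcal S(M)$. A subset $Y$ of a topological space is irreducible if it is nonempty and whenever $Y\subseteq Y_1\cup Y_2$ with $Y_1,Y_2$ closed, then $Y\subseteq Y_1$ or $Y\subseteq Y_2$; an irreducible component is a maximal (under inclusion) irreducible subset. *)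

theory Defs
  imports Main
begin

text \<open>The commutative monoid M is the whole type 'a :: comm_monoid_mult.\<close>

definition mon_ideal :: "'a::comm_monoid_mult set \<Rightarrow> bool" where
  "mon_ideal I \<longleftrightarrow> (\<forall>i\<in>I. \<forall>m. i * m \<in> I)"

definition strongly_irreducible :: "'a::comm_monoid_mult set \<Rightarrow> bool" where
  "strongly_irreducible K \<longleftrightarrow> mon_ideal K \<and> K \<noteq> UNIV \<and>
     (\<forall>I J. mon_ideal I \<longrightarrow> mon_ideal J \<longrightarrow> I \<inter> J \<subseteq> K \<longrightarrow> I \<subseteq> K \<or> J \<subseteq> K)"

definition SI :: "'a::comm_monoid_mult set set" where
  "SI = {K. strongly_irreducible K}"

definition KK :: "'a set set \<Rightarrow> 'a set" where
  "KK X = \<Inter>X"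

definition HK :: "'a::comm_monoid_mult set set \<Rightarrow> 'a set set" where
  "HK X = (if X = {} then {} else {J \<in> SI. KK X \<subseteq> J})"

definition HH :: "'a::comm_monoid_mult set \<Rightarrow> 'a set set" where
  "HH I = {J \<in> SI. I \<subseteq> J}"

definition term_closed :: "'a::comm_monoid_mult set set \<Rightarrow> bool" where
  "term_closed Y \<longleftrightarrow> (\<exists>X. X \<subseteq> SI \<and> Y = HK X)"

definition term_irreducible :: "'a::comm_monoid_mult set set \<Rightarrow> bool" where
  "term_irreducible Y \<longleftrightarrow> Y \<subseteq> SI \<and> Y \<noteq> {} \<and>
     (\<forall>Y1 Y2. term_closed Y1 \<longrightarrow> term_closed Y2 \<longrightarrow> Y \<subseteq> Y1 \<union> Y2 \<longrightarrow> Y \<subseteq> Y1 \<or> Y \<subseteq> Y2)"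

definition term_components :: "'a::comm_monoid_mult set set set" where
  "term_components = {Y. term_irreducible Y \<and> (\<forall>Z. term_irreducible Z \<longrightarrow> Y \<subseteq> Z \<longrightarrow> Z = Y)}"

definition minimal_SI :: "'a::comm_monoid_mult set set" where
  "minimal_SI = {I \<in> SI. \<forall>J \<in> SI. J \<subseteq> I \<longrightarrow> J = I}"

end

theory Submission
  imports Defs
begin

text \<open>
  The closure of a point \<open>I\<close> of the terminal space is \<open>\<H>(I)\<close>, so every \<open>\<H>(I)\<close> is irreducible.
  Conversely, if \<open>Y\<close> is irreducible then \<open>\<K>(Y)\<close> is again strongly irreducible: if \<open>I \<inter> J \<subseteq> \<K>(Y)\<close>,
  then \<open>Y\<close> is covered by the closures of \<open>{K \<in> Y. I \<subseteq> K}\<close> and \<open>{K \<in> Y. J \<subseteq> K}\<close>, and irreducibility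
  puts \<open>Y\<close> into one of them. Hence every irreducible \<open>Y\<close> lies in the irreducible set \<open>\<H>(\<K>(Y))\<close>,
  so the components are exactly the sets \<open>\<H>(I)\<close>; these are maximal precisely when \<open>I\<close> is minimal.
\<close>

lemma mon_ideal_Inter: "(\<And>K. K \<in> X \<Longrightarrow> mon_ideal K) \<Longrightarrow> mon_ideal (\<Inter>X)"
  unfolding mon_ideal_def by blast

lemma subset_HK: "Z \<subseteq> SI \<Longrightarrow> Z \<subseteq> HK Z"
  unfolding HK_def KK_def by auto

lemma KK_subset_if_subset_HK:
  assumes "Y \<noteq> {}" and "Y \<subseteq> HK Z"
  shows "KK Z \<subseteq> KK Y"
  using assms unfolding HK_def KK_def by (auto split: if_splits)

lemma HH_subset_closed:
  assumes "term_closed C" and "I \<in> C"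
  shows "HH I \<subseteq> C"
  using assms unfolding term_closed_def HK_def HH_def by (auto split: if_splits)

lemma subset_HH_KK: "Y \<subseteq> SI \<Longrightarrow> Y \<subseteq> HH (KK Y)"
  unfolding HH_def KK_def by auto

lemma KK_HH: "I \<in> SI \<Longrightarrow> KK (HH I) = I"
  unfolding HH_def KK_def by auto

lemma term_irreducible_HH:
  assumes "I \<in> SI"
  shows "term_irreducible (HH I)"
proof -
  have "I \<in> HH I" using assms unfolding HH_def by simp
  then show ?thesis
    using HH_subset_closed unfolding term_irreducible_def HH_def by blast
qed

lemma KK_term_irreducible_in_SI:
  assumes Y: "term_irreducible (Y :: 'a::comm_monoid_mult set set)"
  shows "KK Y \<in> SI"
proof -
  from Y have YS: "Y \<subseteq> SI" and ne: "Y \<noteq> {}"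
    and irr: "\<And>C1 C2. term_closed C1 \<Longrightarrow> term_closed C2 \<Longrightarrow> Y \<subseteq> C1 \<union> C2 \<Longrightarrow> Y \<subseteq> C1 \<or> Y \<subseteq> C2"
    unfolding term_irreducible_def by blast+
  have si: "\<And>K. K \<in> Y \<Longrightarrow> strongly_irreducible K"
    using YS by (auto simp: SI_def)
  have ideal: "mon_ideal (KK Y)"
    unfolding KK_def by (rule mon_ideal_Inter) (use si in \<open>simp add: strongly_irreducible_def\<close>)
  have proper: "KK Y \<noteq> UNIV"
    using ne si unfolding KK_def strongly_irreducible_def by blast
  have prime: "I \<subseteq> KK Y \<or> J \<subseteq> KK Y"
    if I: "mon_ideal I" and J: "mon_ideal J" and IJ: "I \<inter> J \<subseteq> KK Y" for I J
  proof -
    define above where "above L = {K \<in> Y. L \<subseteq> K}" for L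
    have above_SI: "above L \<subseteq> SI" for L
      using YS unfolding above_def by blast
    have closed: "term_closed (HK (above L))" for L
      unfolding term_closed_def using above_SI by blast
    have "Y \<subseteq> above I \<union> above J"
    proof
      fix K assume K: "K \<in> Y"
      then have "I \<inter> J \<subseteq> K" using IJ unfolding KK_def by blast
      then show "K \<in> above I \<union> above J"
        using si[OF K] I J K unfolding strongly_irreducible_def above_def by simp
    qed
    also have "\<dots> \<subseteq> HK (above I) \<union> HK (above J)"
      using subset_HK[OF above_SI] by blast
    finally have "Y \<subseteq> HK (above I) \<or> Y \<subseteq> HK (above J)"
      using irr closed by blast
    moreover have "L \<subseteq> KK Y" if "Y \<subseteq> HK (above L)" for L
    proof -
      have "L \<subseteq> KK (above L)" unfolding above_def KK_def by blast
      also have "\<dots> \<subseteq> KK Y" using KK_subset_if_subset_HK[OF ne that] .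
      finally show ?thesis .
    qed
    ultimately show ?thesis by blast
  qed
  show ?thesis
    using ideal proper prime unfolding SI_def strongly_irreducible_def by simp
qed

lemma HH_KK_component:
  assumes "Y \<in> term_components"
  shows "HH (KK Y) = Y"
proof -
  have irr: "term_irreducible Y"
    and max: "\<And>Z. term_irreducible Z \<Longrightarrow> Y \<subseteq> Z \<Longrightarrow> Z = Y"
    using assms unfolding term_components_def by blast+
  have "Y \<subseteq> SI" using irr unfolding term_irreducible_def by blast
  then show ?thesis
    using max[OF term_irreducible_HH[OF KK_term_irreducible_in_SI[OF irr]] subset_HH_KK] by blast
qed

lemma KK_component_minimal:
  assumes Y: "Y \<in> term_components"
  shows "KK Y \<in> minimal_SI"
proof -
  have irr: "term_irreducible Y"
    and max: "\<And>Z. term_irreducible Z \<Longrightarrow> Y \<subseteq> Z \<Longrightarrow> Z = Y"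
    using Y unfolding term_components_def by blast+
  have "J = KK Y" if J: "J \<in> SI" "J \<subseteq> KK Y" for J
  proof -
    have "Y \<subseteq> HH J"
      using J HH_KK_component[OF Y] unfolding HH_def by blast
    then have "HH J = Y" using max[OF term_irreducible_HH[OF J(1)]] by blast
    then have "J \<in> Y" using J(1) unfolding HH_def by blast
    then show ?thesis using J(2) unfolding KK_def by blast
  qed
  then show ?thesis
    using KK_term_irreducible_in_SI[OF irr] unfolding minimal_SI_def by blast
qed

lemma HH_minimal_component:
  assumes I: "I \<in> minimal_SI"
  shows "HH I \<in> term_components"
proof -
  have ISI: "I \<in> SI" and min: "\<And>J. J \<in> SI \<Longrightarrow> J \<subseteq> I \<Longrightarrow> J = I"
    using I unfolding minimal_SI_def by blast+
  have "Z = HH I" if Z: "term_irreducible Z" and sub: "HH I \<subseteq> Z" for Z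
  proof -
    have "I \<in> Z" using sub ISI unfolding HH_def by blast
    then have "KK Z = I"
      using min[OF KK_term_irreducible_in_SI[OF Z]] unfolding KK_def by blast
    then have "Z \<subseteq> HH I"
      using subset_HH_KK Z unfolding term_irreducible_def by metis
    then show ?thesis using sub by blast
  qed
  then show ?thesis
    using term_irreducible_HH[OF ISI] unfolding term_components_def by blast
qed

theorem theorem2p8:
  shows "bij_betw KK (term_components :: 'a::comm_monoid_mult set set set) minimal_SI
    \<and> (\<forall>X \<in> (term_components :: 'a set set set). HH (KK X) = X)
    \<and> (\<forall>I \<in> (minimal_SI :: 'a set set). KK (HH I) = I)"
proof -
  have left: "\<forall>X \<in> (term_components :: 'a set set set). HH (KK X) = X"
    using HH_KK_component by blast
  have right: "\<forall>I \<in> (minimal_SI :: 'a set set). KK (HH I) = I"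
    using KK_HH unfolding minimal_SI_def by blast
  have "bij_betw KK (term_components :: 'a set set set) minimal_SI"
    by (rule bij_betw_byWitness[OF left right])
      (use KK_component_minimal HH_minimal_component in blast)+
  with left right show ?thesis by blast
qed

end
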